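(* Let $\eta,\delta,M$ be integers greater than $1$ and let $f$ be a positive integer, with $\gcd(\eta,\delta)=1$, such that $$M=\frac{\delta^{2}(3f^{2}-1)}{3(\eta+\delta)^{2}+\delta^{2}},$$ and such that there is an integer $a\geq1$ for which $\sum_{i=0}^{M-1}(a+i)^{2}$ is a perfect square. Then: (i) if $\delta\equiv 1$ or $5\pmod 6$, then $M\equiv 0\pmod{\delta^{2}}$; if $\delta\equiv 0\pmod 6$, then $M\equiv 0\pmod{\delta^{2}/3}$; (ii) if moreover $f\equiv 1\pmod 2$, then $M\equiv 0\pmod{2\delta^{2}}$ when $\delta\equiv 1$ or $5\pmod 6$, and $M\equiv 0\pmod{2\delta^{2}/3}$ when $\delta\equiv 0\pmod 6$.
   Context: Here $f=a_2-a_1$ is the difference of the first terms of a pair $(a_1,a_2)$ of positive integers with $a_1+a_2=(\eta/\delta)M+1$. It is known from earlier work (cited) that a sum of $M>1$ consecutive squares $\sum_{i=0}^{M-1}(a+i)^2$ with $a\ge1$ can be a perfect square only if $M\equiv 0$ or $24\pmod{72}$, or $M\equiv 1,2$ or $16\pmod{24}$, or $M\equiv 9$ or $33\pmod{72}$, or $M\equiv 11\pmod{12}$. *)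

theory Defs
  imports Complex_Main
begin

end

theory Submission
  imports Defs
begin

text \<open>
  Clearing denominators gives \<open>M (\<delta>\<^sup>2 + 3(\<eta>+\<delta>)\<^sup>2) = \<delta>\<^sup>2 (3f\<^sup>2 - 1)\<close>. Modulo \<open>\<delta>\<close> the
  cofactor of \<open>M\<close> is \<open>3\<eta>\<^sup>2\<close>, so when \<open>3 \<nmid> \<delta>\<close> it is coprime to \<open>\<delta>\<close> and \<open>\<delta>\<^sup>2\<close> divides \<open>M\<close>;
  when \<open>\<delta> = 3c\<close> one divides by 3 and argues in the same way with \<open>3c\<^sup>2\<close> and
  \<open>(\<eta>+\<delta>)\<^sup>2 + 3c\<^sup>2\<close>. In both cases the cofactor of \<open>M\<close> has the form \<open>x\<^sup>2 + 3y\<^sup>2\<close>, which is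
  never \<open>2 mod 4\<close>, whereas \<open>3f\<^sup>2 - 1 \<equiv> 2 (mod 4)\<close> for odd \<open>f\<close>; this forces one more
  factor 2 into \<open>M\<close>.
\<close>

lemma coprime_add_mult_self_iff: "coprime (a::int) (k * a + b) \<longleftrightarrow> coprime a b"
  by (simp add: coprime_iff_gcd_eq_1 gcd_add_mult)

lemma square_mod_4: "(x::int)^2 mod 4 = 0 \<or> x^2 mod 4 = 1"
proof (cases "even x")
  case True
  then obtain k where "x^2 = 4 * k^2" by (auto simp: power2_eq_square elim!: evenE)
  then show ?thesis by simp
next
  case False
  then obtain k where "x = 2 * k + 1" by (metis oddE)
  then have "x^2 = 4 * (k^2 + k) + 1" by (simp add: power2_eq_square algebra_simps)
  then show ?thesis by presburger
qed

lemma sq_plus_three_sq_mod_4: "((x::int)^2 + 3 * y^2) mod 4 \<noteq> 2"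
  using square_mod_4[of x] square_mod_4[of y] by presburger

lemma three_sq_minus_one_mod_4:
  assumes "odd (f::int)" shows "(3 * f^2 - 1) mod 4 = 2"
proof -
  obtain k where "f = 2 * k + 1" using assms by (metis oddE)
  then have "3 * f^2 - 1 = 4 * (3 * k^2 + 3 * k) + 2" by (simp add: power2_eq_square algebra_simps)
  then show ?thesis by presburger
qed

lemma coprime_3_if_not_dvd: "\<not> 3 dvd (d::int) \<Longrightarrow> coprime 3 d"
proof -
  assume "\<not> 3 dvd d"
  then have "d mod 3 = 1 \<or> d mod 3 = 2" by presburger
  moreover have "coprime (3::int) 2"
    using coprime_add_mult_self_iff[of 2 1 1] by (simp add: coprime_commute)
  ultimately have "coprime 3 (d mod 3)" by (metis coprime_1_right)
  then show ?thesis by simp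
qed

lemma even_cofactor_of_three_sq_minus_one:
  fixes t x y f :: int
  assumes "t * (x^2 + 3 * y^2) = 3 * f^2 - 1" and "odd f"
  shows "even t"
proof (rule ccontr)
  assume "odd t"
  define D where "D = x^2 + 3 * y^2"
  have "(t mod 4) * (D mod 4) mod 4 = 2"
    using assms three_sq_minus_one_mod_4 unfolding D_def by (metis mod_mult_eq)
  moreover have "t mod 4 = 1 \<or> t mod 4 = 3" using \<open>odd t\<close> by presburger
  moreover have "D mod 4 \<noteq> 2" unfolding D_def by (rule sq_plus_three_sq_mod_4)
  moreover have "D mod 4 \<in> {0, 1, 2, 3}" by auto
  ultimately show False by auto
qed

lemma cancel_coprime_factor:
  fixes M D c N :: int
  assumes "M * D = c * N" and "coprime c D" and "c \<noteq> 0"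
  obtains t where "M = c * t" and "t * D = N"
proof -
  have "c dvd M" using assms(1,2) coprime_dvd_mult_left_iff by (metis dvd_triv_left)
  then obtain t where t: "M = c * t" by blast
  with assms(1,3) have "t * D = N" by (simp add: mult.assoc)
  with t show thesis by (rule that)
qed

lemma dvd_of_mult_sq_plus_three_sq:
  fixes M c x y f :: int
  assumes "M * (x^2 + 3 * y^2) = c * (3 * f^2 - 1)"
    and "coprime c (x^2 + 3 * y^2)" and "c \<noteq> 0"
  shows "c dvd M" and "odd f \<Longrightarrow> 2 * c dvd M"
proof -
  obtain t where t: "M = c * t" and "t * (x^2 + 3 * y^2) = 3 * f^2 - 1"
    using cancel_coprime_factor[OF assms] .
  then show "c dvd M" by simp
  assume "odd f"
  then have "even t" using even_cofactor_of_three_sq_minus_one \<open>t * _ = _\<close> by blast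
  then show "2 * c dvd M" using t by (auto simp: mult.left_commute)
qed

lemma sq_dvd_if_not_three_dvd:
  fixes eta delta M f :: int
  assumes "coprime eta delta" and "\<not> 3 dvd delta" and "delta \<noteq> 0"
    and eq: "M * (3 * (eta + delta)^2 + delta^2) = delta^2 * (3 * f^2 - 1)"
  shows "delta^2 dvd M" and "odd f \<Longrightarrow> 2 * delta^2 dvd M"
proof -
  have "coprime delta 3"
    using coprime_3_if_not_dvd[OF assms(2)] by (simp add: coprime_commute)
  then have "coprime delta (3 * eta^2)" using assms(1) by (simp add: coprime_commute)
  moreover have "delta^2 + 3 * (eta + delta)^2 = (4 * delta + 6 * eta) * delta + 3 * eta^2"
    by (simp add: power2_eq_square algebra_simps)
  ultimately have "coprime (delta^2) (delta^2 + 3 * (eta + delta)^2)"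
    by (simp add: coprime_add_mult_self_iff)
  moreover have "M * (delta^2 + 3 * (eta + delta)^2) = delta^2 * (3 * f^2 - 1)"
    using eq by (simp add: add.commute)
  ultimately show "delta^2 dvd M" and "odd f \<Longrightarrow> 2 * delta^2 dvd M"
    using dvd_of_mult_sq_plus_three_sq assms(3) by auto
qed

lemma three_sq_dvd_if_three_dvd:
  fixes eta delta c M f :: int
  assumes "coprime eta delta" and "delta = 3 * c" and "c \<noteq> 0"
    and eq: "M * (3 * (eta + delta)^2 + delta^2) = delta^2 * (3 * f^2 - 1)"
  shows "3 * c^2 dvd M" and "odd f \<Longrightarrow> 2 * (3 * c^2) dvd M"
proof -
  define E where "E = (eta + delta)^2 + 3 * c^2"
  have "3 * (M * E) = 3 * (3 * c^2 * (3 * f^2 - 1))"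
    using eq unfolding E_def assms(2) by (simp add: power2_eq_square algebra_simps)
  then have eqE: "M * E = 3 * c^2 * (3 * f^2 - 1)" by linarith
  have "coprime 3 eta" and "coprime c eta"
    using assms(1,2) by (auto simp: coprime_commute)
  moreover have "E = (2 * eta * c + 4 * c^2) * 3 + eta^2" and "E = (6 * eta + 12 * c) * c + eta^2"
    unfolding E_def assms(2) by (simp_all add: power2_eq_square algebra_simps)
  ultimately have "coprime 3 E" and "coprime c E"
    by (metis coprime_add_mult_self_iff coprime_power_right_iff)+
  then have "coprime (3 * c^2) E" by simp
  then show "3 * c^2 dvd M" and "odd f \<Longrightarrow> 2 * (3 * c^2) dvd M"
    using dvd_of_mult_sq_plus_three_sq[of M "eta + delta" c "3 * c^2" f] eqE assms(3)
    unfolding E_def by auto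
qed

theorem corollary2:
  fixes eta delta M f :: int
  assumes "eta > 1" and "delta > 1" and "M > 1" and "f > 0"
    and "gcd eta delta = 1"
    and "(of_int M :: rat) =
           of_int (delta^2 * (3 * f^2 - 1)) / of_int (3 * (eta + delta)^2 + delta^2)"
    and "\<exists>a::int. a \<ge> 1 \<and> (\<exists>k::int. (\<Sum>i\<in>{0..M-1}. (a + i)^2) = k^2)"
  shows "((delta mod 6 = 1 \<or> delta mod 6 = 5) \<longrightarrow> delta^2 dvd M)
       \<and> (delta mod 6 = 0 \<longrightarrow> (delta^2 div 3) dvd M)
       \<and> (odd f \<longrightarrow>
            ((delta mod 6 = 1 \<or> delta mod 6 = 5) \<longrightarrow> 2 * delta^2 dvd M)
          \<and> (delta mod 6 = 0 \<longrightarrow> (2 * delta^2 div 3) dvd M))"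
proof -
  define D where "D = 3 * (eta + delta)^2 + delta^2"
  have "D > 0" unfolding D_def using assms(2) by (intro add_nonneg_pos) auto
  then have "(of_int (M * D) :: rat) = of_int (delta^2 * (3 * f^2 - 1))"
    using assms(6) unfolding D_def[symmetric] by (simp add: field_simps)
  then have eq: "M * (3 * (eta + delta)^2 + delta^2) = delta^2 * (3 * f^2 - 1)"
    unfolding D_def by (simp only: of_int_eq_iff)
  have cop: "coprime eta delta" using assms(5) by (simp add: coprime_iff_gcd_eq_1)
  have "delta mod 6 = 1 \<or> delta mod 6 = 5 \<Longrightarrow> \<not> 3 dvd delta" by presburger
  moreover note sq_dvd_if_not_three_dvd[OF cop _ _ eq]
  moreover define c where "c = delta div 3"
  then have "delta mod 6 = 0 \<Longrightarrow> delta = 3 * c \<and> c \<noteq> 0 \<and> delta^2 div 3 = 3 * c^2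
      \<and> 2 * delta^2 div 3 = 2 * (3 * c^2)"
    using assms(2) by (auto simp: power2_eq_square)
  moreover note three_sq_dvd_if_three_dvd[OF cop _ _ eq]
  ultimately show ?thesis using assms(2) by auto
qed

end
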